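(* (i) The Max-Egal objective is subject to 1-safe UB-improvement by a manipulator $m^-$ over directed networks. (ii) The At-least-1 objective is subject to 1-safe UB-improvement by a manipulator $m^+$ over undirected networks. Here "subject to 1-safe UB-improvement" means: there exist $k$, a network $G$ of the stated type, an agent $m$ and a manipulation $r_m$ of the stated kind such that for every possible network $\overline{G_1}$ of the distance-1 partial network $G_1$ of $m$, \[\max_{P\in O(\overline{G_1}^m)} u(m,P)\ge\max_{P\in O(\overline{G_1})} u(m,P),\] and for at least one possible network $\overline{G_1}$ the inequality is strict.
   Context: Agents $A=\{a_1,\dots,a_n\}$ (finite); the social network $G=\langle A,E\rangle$ is a directed or undirected graph without self-loops; $N(a)$ is the set of (out-)neighbours of $a$. For $C\ni a$, $u(a,C)=|C\cap N(a)|$. For $0<k\le n$, $\Pi_k$ is the set of partitions of $A$ into exactly $k$ nonempty coalitions, and $u(a,P)=u(a,C)$ for the $C\in P$ containing $a$. Objectives: Max-Egal — $O(G)$ is the set of $P\in\Pi_k$ maximizing $\min_{a}u(a,P)$; At-least-1 — $O(G)$ is the set of $P\in\Pi_k$ in which every agent has utility $\ge1$, and if none exists $O(G)=\emptyset$ and all utilities (hence min and max over $O(G)$) are taken as $0$. Manipulator types: $m^-$ removes edges (in directed networks only outgoing edges $(m,a)\in E$); $m^+$ adds edges (in undirected networks any new edge $\{m,a\}$). The manipulator's utility $u(m,P)$ is computed with respect to his true neighbours. Limited information: let $A_0=\{m\}$ and $E_1\subseteq E$ the set of edges with an endpoint in $A_0$; $G_1=(A,E_1)$ is the partial network known to $m$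 (distance 1); $m$ knows all agents of $A$. A possible network of $G_1$ is $\overline{G_1}=(A,E_1\cup E')$ where no edge of $E'$ has an endpoint in $A_0$. $\overline{G_1}^m$ denotes the result of applying the manipulation $r_m$ (the same added/removed edges at $m$) to $\overline{G_1}$, and $u(m,P)$ there is computed with $m$'s true neighbours. *)

theory Defs
  imports "HOL-Library.Disjoint_Sets"
begin

text \<open>Undirected: additionally symmetric
  (an undirected edge {a,b} is represented by both (a,b) and (b,a)).\<close>

definition network_dir :: "nat set \<Rightarrow> (nat \<times> nat) set \<Rightarrow> bool" where
  "network_dir A E \<longleftrightarrow> E \<subseteq> A \<times> A \<and> (\<forall>a. (a, a) \<notin> E)"

definition network_undir :: "nat set \<Rightarrow> (nat \<times> nat) set \<Rightarrow> bool" where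
  "network_undir A E \<longleftrightarrow> network_dir A E \<and> sym E"

definition nbrs :: "(nat \<times> nat) set \<Rightarrow> nat \<Rightarrow> nat set" where
  "nbrs E a = {b. (a, b) \<in> E}"

definition util :: "(nat \<times> nat) set \<Rightarrow> nat \<Rightarrow> nat set \<Rightarrow> nat" where
  "util E a C = card (C \<inter> nbrs E a)"

definition coal :: "nat set set \<Rightarrow> nat \<Rightarrow> nat set" where
  "coal P a = (THE C. C \<in> P \<and> a \<in> C)"

definition utilP :: "(nat \<times> nat) set \<Rightarrow> nat \<Rightarrow> nat set set \<Rightarrow> nat" where
  "utilP E a P = util E a (coal P a)"

definition Pi_k :: "nat set \<Rightarrow> nat \<Rightarrow> nat set set set" where
  "Pi_k A k = {P. partition_on A P \<and> card P = k}"

definition egal :: "nat set \<Rightarrow> (nat \<times> nat) set \<Rightarrow> nat set set \<Rightarrow> nat" where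
  "egal A E P = Min ((\<lambda>a. utilP E a P) ` A)"

definition O_maxegal :: "nat set \<Rightarrow> nat \<Rightarrow> (nat \<times> nat) set \<Rightarrow> nat set set set" where
  "O_maxegal A k E = {P \<in> Pi_k A k. \<forall>Q \<in> Pi_k A k. egal A E Q \<le> egal A E P}"

definition O_atleast1 :: "nat set \<Rightarrow> nat \<Rightarrow> (nat \<times> nat) set \<Rightarrow> nat set set set" where
  "O_atleast1 A k E = {P \<in> Pi_k A k. \<forall>a \<in> A. 1 \<le> utilP E a P}"

text \<open>Best utility of m (w.r.t. its true edges Etrue) over an outcome set; 0 if empty.\<close>
definition maxval :: "(nat \<times> nat) set \<Rightarrow> nat \<Rightarrow> nat set set set \<Rightarrow> nat" where
  "maxval Etrue m Os = (if Os = {} then 0 else Max ((\<lambda>P. utilP Etrue m P) ` Os))"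

definition known_edges :: "nat \<Rightarrow> (nat \<times> nat) set \<Rightarrow> (nat \<times> nat) set" where
  "known_edges m E = {e \<in> E. fst e = m \<or> snd e = m}"

definition possible_dir :: "nat set \<Rightarrow> nat \<Rightarrow> (nat \<times> nat) set \<Rightarrow> (nat \<times> nat) set \<Rightarrow> bool" where
  "possible_dir A m E Eb \<longleftrightarrow> (\<exists>E'. network_dir A E' \<and> (\<forall>(x, y) \<in> E'. x \<noteq> m \<and> y \<noteq> m)
      \<and> Eb = known_edges m E \<union> E')"

definition possible_undir :: "nat set \<Rightarrow> nat \<Rightarrow> (nat \<times> nat) set \<Rightarrow> (nat \<times> nat) set \<Rightarrow> bool" where
  "possible_undir A m E Eb \<longleftrightarrow> (\<exists>E'. network_undir A E' \<and> (\<forall>(x, y) \<in> E'. x \<noteq> m \<and> y \<noteq> m)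
      \<and> Eb = known_edges m E \<union> E')"

text \<open>1-safe UB-improvement for a fixed instance: manip maps a possible network to
  the network after applying the manipulation r_m.\<close>
definition safe_UB_improvement ::
  "(nat set \<Rightarrow> nat \<Rightarrow> (nat \<times> nat) set \<Rightarrow> nat set set set) \<Rightarrow> ((nat \<times> nat) set \<Rightarrow> bool)
   \<Rightarrow> nat set \<Rightarrow> nat \<Rightarrow> (nat \<times> nat) set \<Rightarrow> nat \<Rightarrow> ((nat \<times> nat) set \<Rightarrow> (nat \<times> nat) set) \<Rightarrow> bool" where
  "safe_UB_improvement Obj poss A k E m manip \<longleftrightarrow>
     (\<forall>Eb. poss Eb \<longrightarrow> maxval E m (Obj A k (manip Eb)) \<ge> maxval E m (Obj A k Eb)) \<and>
     (\<exists>Eb. poss Eb \<and> maxval E m (Obj A k (manip Eb)) > maxval E m (Obj A k Eb))"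

end

theory Submission
  imports Defs
begin

text \<open>(i) Removing all of m's outgoing edges isolates m in every possible network, so every
  partition becomes Max-Egal optimal and m's best outcome can only improve. Take m = 0 with edges
  to and from 1 and 2, and k = 2. In the possible network that adds the edge 2-3, the path
  1-0-2-3, some partition gives every agent a neighbour, hence so does every optimum; then 1 sits
  with 0 and 3 with 2, and as k = 2 the agents 0 and 2 are apart, leaving m one neighbour. After
  the manipulation {{0,1,2},{3}} is optimal and gives m two.
  (ii) Adding edges only raises utilities, so At-least-1 outcomes survive. With the single edge
  0-1 on {0,1,2} and k = 1, the possible network without further edges isolates agent 2 and has
  no outcome, while linking m = 0 to 2 makes the grand coalition an outcome.\<close>

lemma coal_eqI:
  assumes "partition_on A P" "C \<in> P" "a \<in> C"
  shows "coal P a = C"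
  unfolding coal_def
proof (rule the_equality)
  show "C \<in> P \<and> a \<in> C" using assms by blast
next
  fix D assume "D \<in> P \<and> a \<in> D"
  then show "D = C" using assms partition_onD2[OF assms(1)] unfolding disjoint_def by blast
qed

lemma coal_in_partition:
  assumes "partition_on A P" "a \<in> A"
  shows "coal P a \<in> P" "a \<in> coal P a"
proof -
  obtain C where "C \<in> P" "a \<in> C" using assms partition_onD1[OF assms(1)] by blast
  then show "coal P a \<in> P" "a \<in> coal P a" using coal_eqI[OF assms(1)] by simp_all
qed

lemma partition_on_eq_singleton:
  assumes "partition_on A P" "C \<in> P" "A \<subseteq> C"
  shows "P = {C}"
proof -
  have "D = C" if "D \<in> P" for D
  proof -
    have "D \<noteq> {}" "D \<subseteq> A" using that partition_onD1[OF assms(1)] partition_onD3[OF assms(1)]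
      by auto
    then show ?thesis using that assms partition_onD2[OF assms(1)] unfolding disjoint_def by blast
  qed
  then show ?thesis using assms(2) by blast
qed

lemma finite_Pi_k: "finite A \<Longrightarrow> finite (Pi_k A k)"
  unfolding Pi_k_def by (rule finite_subset[OF _ finitely_many_partition_on]) auto

lemma utilP_pos_imp_nbr_in_coal: "0 < utilP E a P \<Longrightarrow> \<exists>b\<in>nbrs E a. b \<in> coal P a"
  unfolding utilP_def util_def by (auto simp: card_gt_0_iff)

lemma utilP_isolated: "nbrs E a = {} \<Longrightarrow> utilP E a P = 0"
  unfolding utilP_def util_def by simp

lemma utilP_mono:
  assumes "E \<subseteq> E'" "finite (nbrs E' a)"
  shows "utilP E a P \<le> utilP E' a P"
proof -
  have "nbrs E a \<subseteq> nbrs E' a" using assms(1) unfolding nbrs_def by auto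
  then show ?thesis unfolding utilP_def util_def
    by (intro card_mono) (auto intro: finite_subset[OF _ assms(2)])
qed

lemma utilP_le_maxval: "finite Os \<Longrightarrow> P \<in> Os \<Longrightarrow> utilP E m P \<le> maxval E m Os"
  unfolding maxval_def by auto

lemma maxval_le: "finite Os \<Longrightarrow> (\<And>P. P \<in> Os \<Longrightarrow> utilP E m P \<le> c) \<Longrightarrow> maxval E m Os \<le> c"
  unfolding maxval_def by auto

lemma maxval_mono: "finite Os' \<Longrightarrow> Os \<subseteq> Os' \<Longrightarrow> maxval E m Os \<le> maxval E m Os'"
  unfolding maxval_def by (auto intro: Max_mono)

lemma egal_ge_iff:
  "finite A \<Longrightarrow> A \<noteq> {} \<Longrightarrow> c \<le> egal A E P \<longleftrightarrow> (\<forall>a\<in>A. c \<le> utilP E a P)"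
  unfolding egal_def by simp

lemma O_maxegal_subset_Pi_k: "O_maxegal A k E \<subseteq> Pi_k A k"
  unfolding O_maxegal_def by auto

lemma O_atleast1_subset_Pi_k: "O_atleast1 A k E \<subseteq> Pi_k A k"
  unfolding O_atleast1_def by auto

lemma O_maxegal_isolated:
  assumes "finite A" "m \<in> A" "nbrs E m = {}"
  shows "O_maxegal A k E = Pi_k A k"
proof -
  have "egal A E P = 0" for P
    using egal_ge_iff[OF assms(1), of 1 E P] assms utilP_isolated by fastforce
  then show ?thesis unfolding O_maxegal_def by auto
qed

lemma O_maxegal_subset_O_atleast1:
  assumes "finite A" "A \<noteq> {}" "O_atleast1 A k E \<noteq> {}"
  shows "O_maxegal A k E \<subseteq> O_atleast1 A k E"
proof
  fix P assume P: "P \<in> O_maxegal A k E"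
  obtain Q where Q: "Q \<in> O_atleast1 A k E" using assms(3) by blast
  then have "1 \<le> egal A E Q"
    using egal_ge_iff[OF assms(1,2)] unfolding O_atleast1_def by blast
  also have "\<dots> \<le> egal A E P" using P Q unfolding O_maxegal_def O_atleast1_def by blast
  finally show "P \<in> O_atleast1 A k E"
    using P egal_ge_iff[OF assms(1,2)] unfolding O_maxegal_def O_atleast1_def by blast
qed

lemma O_atleast1_mono:
  assumes "E \<subseteq> E'" "E' \<subseteq> A \<times> A" "finite A"
  shows "O_atleast1 A k E \<subseteq> O_atleast1 A k E'"
proof -
  have "finite (nbrs E' a)" for a
    using assms(2,3) unfolding nbrs_def by (auto intro: finite_subset)
  then show ?thesis
    unfolding O_atleast1_def using utilP_mono[OF assms(1)] order_trans by blast
qed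

lemma nbrs_possible_dir: "possible_dir A m E Eb \<Longrightarrow> nbrs Eb m = nbrs E m"
  unfolding possible_dir_def nbrs_def known_edges_def by auto

lemma possible_undir_subset:
  "network_undir A E \<Longrightarrow> possible_undir A m E Eb \<Longrightarrow> Eb \<subseteq> A \<times> A"
  unfolding possible_undir_def network_undir_def network_dir_def known_edges_def by blast

lemma maxval_O_maxegal_remove_out_edges:
  assumes "finite A" "m \<in> A" "possible_dir A m E Eb"
  shows "maxval Et m (O_maxegal A k Eb) \<le> maxval Et m (O_maxegal A k (Eb - {e \<in> E. fst e = m}))"
proof -
  have "nbrs (Eb - {e \<in> E. fst e = m}) m = {}"
    using nbrs_possible_dir[OF assms(3)] unfolding nbrs_def by auto
  then have "O_maxegal A k (Eb - {e \<in> E. fst e = m}) = Pi_k A k"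
    using O_maxegal_isolated assms(1,2) by blast
  then show ?thesis using maxval_mono finite_Pi_k[OF assms(1)] O_maxegal_subset_Pi_k by metis
qed

lemma maxval_O_atleast1_add_edges:
  assumes "finite A" "m \<in> A" "S \<subseteq> A" "network_undir A E" "possible_undir A m E Eb"
  shows "maxval Et m (O_atleast1 A k Eb)
    \<le> maxval Et m (O_atleast1 A k (Eb \<union> {(m, a) | a. a \<in> S} \<union> {(a, m) | a. a \<in> S}))"
  using assms possible_undir_subset[OF assms(4,5)]
  by (intro maxval_mono O_atleast1_mono finite_subset[OF O_atleast1_subset_Pi_k finite_Pi_k])
    auto

lemma maxegal_path_outcome_separates:
  defines "Eb \<equiv> {(0, 1), (0, 2), (1, 0), (2, 0), (2, 3), (3, 2)} :: (nat \<times> nat) set"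
  assumes P: "P \<in> O_maxegal {0, 1, 2, 3} 2 Eb"
  shows "2 \<notin> coal P 0"
proof
  let ?A = "{0, 1, 2, 3 :: nat}"
  have nbrs_Eb: "nbrs Eb 0 = {1, 2}" "nbrs Eb 1 = {0}" "nbrs Eb 2 = {0, 3}" "nbrs Eb 3 = {2}"
    unfolding nbrs_def Eb_def by auto
  define Q where "Q = {{0, 1}, {2, 3 :: nat}}"
  have Q: "partition_on ?A Q" unfolding Q_def by (rule partition_onI) (auto simp: disjnt_def)
  have "card Q = 2"
    unfolding Q_def by (subst card_insert_disjoint) (auto simp: insert_eq_iff doubleton_eq_iff)
  moreover have "coal Q 0 = {0, 1}" "coal Q 1 = {0, 1}" "coal Q 2 = {2, 3}" "coal Q 3 = {2, 3}"
    by (rule coal_eqI[OF Q]; simp add: Q_def)+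
  ultimately have "Q \<in> O_atleast1 ?A 2 Eb"
    using Q nbrs_Eb unfolding O_atleast1_def Pi_k_def utilP_def util_def by auto
  then have atleast1: "P \<in> O_atleast1 ?A 2 Eb"
    using O_maxegal_subset_O_atleast1[of ?A 2 Eb] P by blast
  then have part: "partition_on ?A P" and "card P = 2" unfolding O_atleast1_def Pi_k_def by auto
  have nbr_with: "b \<in> coal P a" if "a \<in> ?A" "nbrs Eb a = {b}" for a b
    using atleast1 utilP_pos_imp_nbr_in_coal[of Eb a P] that unfolding O_atleast1_def by fastforce
  have same_coal: "coal P b = coal P a" if "a \<in> ?A" "b \<in> coal P a" for a b
    using coal_eqI[OF part coal_in_partition(1)[OF part that(1)] that(2)] .
  assume "2 \<in> coal P 0"
  then have "coal P 1 = coal P 0" "coal P 2 = coal P 0" "coal P 3 = coal P 0"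
    using same_coal nbr_with nbrs_Eb by (metis insertCI)+
  then have "?A \<subseteq> coal P 0"
    using coal_in_partition(2)[OF part] by (metis empty_subsetI insert_subset insertCI)
  then have "P = {coal P 0}"
    using partition_on_eq_singleton[OF part coal_in_partition(1)[OF part, of 0]] by simp
  then have "card P = 1" by (metis is_singletonI is_singleton_altdef)
  then show False using \<open>card P = 2\<close> by simp
qed

lemma maxegal_path_safe_UB_improvement:
  defines "E \<equiv> {(0, 1), (0, 2), (1, 0), (2, 0)} :: (nat \<times> nat) set"
  shows "safe_UB_improvement O_maxegal (possible_dir {0, 1, 2, 3} 0 E) {0, 1, 2, 3} 2 E 0
    (\<lambda>Eb. Eb - {e \<in> E. fst e = 0})"
proof -
  let ?A = "{0, 1, 2, 3 :: nat}" and ?Eb = "{(0, 1), (0, 2), (1, 0), (2, 0), (2, 3), (3, 2)}"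
  have finA: "finite ?A" by simp
  have nbrs_E: "nbrs E 0 = {1, 2}" unfolding nbrs_def E_def by auto
  have weak: "maxval E 0 (O_maxegal ?A 2 Eb) \<le> maxval E 0 (O_maxegal ?A 2 (Eb - {e \<in> E. fst e = 0}))"
    if "possible_dir ?A 0 E Eb" for Eb
    by (rule maxval_O_maxegal_remove_out_edges[OF _ _ that]) simp_all
  have "possible_dir ?A 0 E ?Eb"
    unfolding possible_dir_def network_dir_def known_edges_def E_def
    by (intro exI[of _ "{(2, 3), (3, 2)}"]) auto
  moreover have "utilP E 0 P \<le> 1" if "P \<in> O_maxegal ?A 2 ?Eb" for P
  proof -
    have "coal P 0 \<inter> nbrs E 0 \<subseteq> {1}"
      using maxegal_path_outcome_separates[OF that] nbrs_E by auto
    then show ?thesis unfolding utilP_def util_def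
      using card_mono[of "{1}" "coal P 0 \<inter> nbrs E 0"] by simp
  qed
  then have "maxval E 0 (O_maxegal ?A 2 ?Eb) \<le> 1"
    by (intro maxval_le finite_subset[OF O_maxegal_subset_Pi_k finite_Pi_k[OF finA]])
  moreover have "2 \<le> maxval E 0 (O_maxegal ?A 2 (?Eb - {e \<in> E. fst e = 0}))"
  proof -
    define P where "P = {{0, 1, 2}, {3 :: nat}}"
    have part: "partition_on ?A P" unfolding P_def by (rule partition_onI) (auto simp: disjnt_def)
    have "nbrs (?Eb - {e \<in> E. fst e = 0}) 0 = {}" unfolding nbrs_def E_def by auto
    then have "O_maxegal ?A 2 (?Eb - {e \<in> E. fst e = 0}) = Pi_k ?A 2"
      by (intro O_maxegal_isolated) auto
    moreover have "P \<in> Pi_k ?A 2" using part unfolding Pi_k_def P_def by simp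
    moreover have "coal P 0 = {0, 1, 2}" by (rule coal_eqI[OF part]) (auto simp: P_def)
    then have "utilP E 0 P = 2" using nbrs_E unfolding utilP_def util_def by simp
    ultimately show ?thesis using utilP_le_maxval finite_Pi_k[OF finA] by metis
  qed
  ultimately show ?thesis unfolding safe_UB_improvement_def using weak by force
qed

lemma atleast1_edge_safe_UB_improvement:
  defines "E \<equiv> {(0, 1), (1, 0)} :: (nat \<times> nat) set"
  shows "safe_UB_improvement O_atleast1 (possible_undir {0, 1, 2} 0 E) {0, 1, 2} 1 E 0
    (\<lambda>Eb. Eb \<union> {(0, a) | a. a \<in> {2}} \<union> {(a, 0) | a. a \<in> {2}})"
proof -
  let ?A = "{0, 1, 2 :: nat}" and ?E' = "E \<union> {(0, a) | a. a \<in> {2}} \<union> {(a, 0) | a. a \<in> {2}}"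
  have net: "network_undir ?A E" unfolding network_undir_def network_dir_def sym_def E_def by auto
  have weak: "maxval E 0 (O_atleast1 ?A 1 Eb)
      \<le> maxval E 0 (O_atleast1 ?A 1 (Eb \<union> {(0, a) | a. a \<in> {2}} \<union> {(a, 0) | a. a \<in> {2}}))"
    if "possible_undir ?A 0 E Eb" for Eb
    by (rule maxval_O_atleast1_add_edges[OF _ _ _ net that]) simp_all
  have "possible_undir ?A 0 E E"
    unfolding possible_undir_def network_undir_def network_dir_def known_edges_def sym_def E_def
    by (intro exI[of _ "{}"]) auto
  moreover have "nbrs E 2 = {}" unfolding nbrs_def E_def by simp
  then have "O_atleast1 ?A 1 E = {}" unfolding O_atleast1_def using utilP_isolated by fastforce
  then have "maxval E 0 (O_atleast1 ?A 1 E) = 0" unfolding maxval_def by simp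
  moreover have "1 \<le> maxval E 0 (O_atleast1 ?A 1 ?E')"
  proof -
    have part: "partition_on ?A {?A}" by (rule partition_on_space) simp
    have coal: "coal {?A} a = ?A" if "a \<in> ?A" for a using coal_eqI[OF part _ that] by simp
    have "nbrs ?E' 0 = {1, 2}" "nbrs ?E' 1 = {0}" "nbrs ?E' 2 = {0}" "nbrs E 0 = {1}"
      unfolding nbrs_def E_def by auto
    then have outcome: "{?A} \<in> O_atleast1 ?A 1 ?E'" and "utilP E 0 {?A} = 1"
      using part coal unfolding O_atleast1_def Pi_k_def utilP_def util_def by auto
    have "finite (O_atleast1 ?A 1 ?E')"
      by (rule finite_subset[OF O_atleast1_subset_Pi_k finite_Pi_k]) simp
    from utilP_le_maxval[OF this outcome, of E 0] show ?thesis
      using \<open>utilP E 0 {?A} = 1\<close> by simp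
  qed
  ultimately show ?thesis unfolding safe_UB_improvement_def using weak by force
qed

theorem proposition2:
  shows "(\<exists>A k E m R. finite A \<and> 0 < k \<and> k \<le> card A \<and> network_dir A E \<and> m \<in> A \<and>
            R \<subseteq> {e \<in> E. fst e = m} \<and>
            safe_UB_improvement O_maxegal (possible_dir A m E) A k E m (\<lambda>Eb. Eb - R))
       \<and> (\<exists>A k E m S. finite A \<and> 0 < k \<and> k \<le> card A \<and> network_undir A E \<and> m \<in> A \<and>
            S \<subseteq> A - {m} - nbrs E m \<and>
            safe_UB_improvement O_atleast1 (possible_undir A m E) A k E m
              (\<lambda>Eb. Eb \<union> {(m, a) | a. a \<in> S} \<union> {(a, m) | a. a \<in> S}))"
proof (intro conjI)
  let ?A = "{0, 1, 2, 3 :: nat}" and ?E = "{(0, 1), (0, 2), (1, 0), (2, 0)} :: (nat \<times> nat) set"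
  have "network_dir ?A ?E" unfolding network_dir_def by auto
  then show "\<exists>A k E m R. finite A \<and> 0 < k \<and> k \<le> card A \<and> network_dir A E \<and> m \<in> A \<and>
      R \<subseteq> {e \<in> E. fst e = m} \<and> safe_UB_improvement O_maxegal (possible_dir A m E) A k E m (\<lambda>Eb. Eb - R)"
    using maxegal_path_safe_UB_improvement
    by (intro exI[of _ ?A] exI[of _ 2] exI[of _ ?E] exI[of _ 0] exI[of _ "{e \<in> ?E. fst e = 0}"]
        conjI; (assumption | simp))
next
  let ?A = "{0, 1, 2 :: nat}" and ?E = "{(0, 1), (1, 0)} :: (nat \<times> nat) set"
  have "network_undir ?A ?E" unfolding network_undir_def network_dir_def sym_def by auto
  then show "\<exists>A k E m S. finite A \<and> 0 < k \<and> k \<le> card A \<and> network_undir A E \<and> m \<in> A \<and>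
      S \<subseteq> A - {m} - nbrs E m \<and> safe_UB_improvement O_atleast1 (possible_undir A m E) A k E m
        (\<lambda>Eb. Eb \<union> {(m, a) | a. a \<in> S} \<union> {(a, m) | a. a \<in> S})"
    using atleast1_edge_safe_UB_improvement
    by (intro exI[of _ ?A] exI[of _ 1] exI[of _ ?E] exI[of _ 0] exI[of _ "{2}"]
        conjI; (assumption | force simp: nbrs_def))
qed

end
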